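(* Let $n\ge3$, $m=n-1$, $A_1=E_1$, $A_i=E_i+E_{i-1,n}$ for $i=2,\dots,n-1$. Let $i\in\{1,\dots,m-1\}$ and let $(Y_1,\dots,Y_i)$ be a strict facial reduction sequence for $\mathcal S^n_+$ all of whose members lie in $\operatorname{lin}\{A_1,\dots,A_m\}$. Then $$\mathcal S^n_+\cap Y_1^\perp\cap\dots\cap Y_i^\perp=0_i\oplus\mathcal S^{n-i}_+ .$$
   Context: $E_{ij}\in\mathcal S^n$ has only nonzero entries $1$ in positions $(i,j),(j,i)$; $E_i:=E_{ii}$; orthogonality is with respect to $S\bullet T=\operatorname{trace}(ST)$. For a closed convex cone $K$, $K^*=\{y:\langle y,x\rangle\ge0\ \forall x\in K\}$. A facial reduction sequence for $K$ is $(y_1,\dots,y_k)$ such that, with $F_0=K$ and $F_j=F_{j-1}\cap y_j^\perp$, one has $y_j\in F_{j-1}^*$ for all $j$; it is strict if moreover $y_j\in F_{j-1}^*\setminus F_{j-1}^\perp$ for all $j$. $0_i\oplus\mathcal S^{n-i}_+$ denotes matrices whose first $i$ rows and columns are zero and whose lower right $(n-i)\times(n-i)$ block is positive semidefinite. *)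

theory Defs
  imports Complex_Main
begin

text \<open>n x n real symmetric matrices are represented as functions
  nat => nat => real, indexed by 1..n, symmetric and zero outside {1..n} x {1..n}.\<close>

type_synonym mat = "nat \<Rightarrow> nat \<Rightarrow> real"

definition symS :: "nat \<Rightarrow> mat set" where
  "symS n = {X. (\<forall>a b. X a b = X b a) \<and>
                (\<forall>a b. a \<notin> {1..n} \<or> b \<notin> {1..n} \<longrightarrow> X a b = 0)}"

definition frob :: "nat \<Rightarrow> mat \<Rightarrow> mat \<Rightarrow> real" where
  "frob n S T = (\<Sum>a=1..n. \<Sum>b=1..n. S a b * T b a)"

definition PSD :: "nat \<Rightarrow> mat set" where
  "PSD n = {X \<in> symS n. \<forall>v::nat \<Rightarrow> real. (\<Sum>a=1..n. \<Sum>b=1..n. v a * X a b * v b) \<ge> 0}"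

definition dualc :: "nat \<Rightarrow> mat set \<Rightarrow> mat set" where
  "dualc n K = {Y \<in> symS n. \<forall>X\<in>K. frob n Y X \<ge> 0}"

definition perp :: "nat \<Rightarrow> mat set \<Rightarrow> mat set" where
  "perp n F = {Y \<in> symS n. \<forall>X\<in>F. frob n Y X = 0}"

text \<open>F_j = K \<inter> y_1^perp \<inter> ... \<inter> y_j^perp (list positions 0..j-1).\<close>
definition fr_face :: "nat \<Rightarrow> mat set \<Rightarrow> mat list \<Rightarrow> nat \<Rightarrow> mat set" where
  "fr_face n K ys j = K \<inter> {X \<in> symS n. \<forall>k<j. frob n (ys ! k) X = 0}"

definition fr_seq :: "nat \<Rightarrow> mat set \<Rightarrow> mat list \<Rightarrow> bool" where
  "fr_seq n K ys = (\<forall>j<length ys. ys ! j \<in> dualc n (fr_face n K ys j))"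

definition strict_fr_seq :: "nat \<Rightarrow> mat set \<Rightarrow> mat list \<Rightarrow> bool" where
  "strict_fr_seq n K ys = (\<forall>j<length ys.
      ys ! j \<in> dualc n (fr_face n K ys j) - perp n (fr_face n K ys j))"

definition Emat :: "nat \<Rightarrow> nat \<Rightarrow> mat" where
  "Emat i j = (\<lambda>a b. if (a = i \<and> b = j) \<or> (a = j \<and> b = i) then 1 else 0)"

definition Amat :: "nat \<Rightarrow> nat \<Rightarrow> mat" where
  "Amat n k = (if k = 1 then Emat 1 1
               else (\<lambda>a b. Emat k k a b + Emat (k - 1) n a b))"

definition linA :: "nat \<Rightarrow> mat set" where
  "linA n = {(\<lambda>a b. \<Sum>k=1..n-1. c k * Amat n k a b) | c :: nat \<Rightarrow> real. True}"

definition zero_oplus_psd :: "nat \<Rightarrow> nat \<Rightarrow> mat set" where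
  "zero_oplus_psd n i = {X \<in> symS n.
      (\<forall>a b. a \<le> i \<or> b \<le> i \<longrightarrow> X a b = 0) \<and>
      (\<forall>v::nat \<Rightarrow> real. (\<Sum>a=i+1..n. \<Sum>b=i+1..n. v a * X a b * v b) \<ge> 0)}"

end

theory Submission
  imports Defs
begin

text \<open>Write \<open>Y = \<Sum>\<^sub>k c\<^sub>k A\<^sub>k\<close> and argue by induction that the \<open>j\<close>-th face is
  \<open>0\<^sub>j \<oplus> S\<^sup>n\<^sup>-\<^sup>j\<^sub>+\<close>. On that face, \<open>Y\<^sub>j\<^sub>+\<^sub>1\<close> lies in the dual cone only if \<open>c\<^sub>k = 0\<close> for
  \<open>k \<ge> j + 2\<close>: the \<open>2 \<times> 2\<close> principal minor on rows \<open>k - 1, n\<close> is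
  \<open>[c\<^sub>k\<^sub>-\<^sub>1, c\<^sub>k; c\<^sub>k, 0]\<close>. What remains of \<open>Y \<bullet> X\<close> is \<open>c\<^sub>j\<^sub>+\<^sub>1 X\<^sub>j\<^sub>+\<^sub>1\<^sub>,\<^sub>j\<^sub>+\<^sub>1\<close> with
  \<open>c\<^sub>j\<^sub>+\<^sub>1 \<noteq> 0\<close> by strictness, so the next face consists of the PSD matrices of the
  face with a zero diagonal entry at \<open>j + 1\<close>, whose whole row then vanishes.\<close>

definition lincomb :: "nat \<Rightarrow> (nat \<Rightarrow> real) \<Rightarrow> mat" where
  "lincomb n c = (\<lambda>a b. \<Sum>k=1..n-1. c k * Amat n k a b)"

lemma linA_eq_range_lincomb: "linA n = range (lincomb n)"
  by (auto simp: linA_def lincomb_def)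

lemma Amat_entry:
  assumes "1 \<le> k" "k < n"
  shows "Amat n k a b = (if k = a \<and> a = b then 1 else 0)
      + (if k = a + 1 \<and> 1 \<le> a \<and> b = n then 1 else 0)
      + (if k = b + 1 \<and> 1 \<le> b \<and> a = n then 1 else 0)"
  using assms by (auto simp: Amat_def Emat_def)

lemma lincomb_entry:
  "lincomb n c a b = (if a = b \<and> 1 \<le> a \<and> a < n then c a else 0)
      + (if b = n \<and> 1 \<le> a \<and> a + 2 \<le> n then c (a + 1) else 0)
      + (if a = n \<and> 1 \<le> b \<and> b + 2 \<le> n then c (b + 1) else 0)"
  (is "_ = ?rhs")
proof -
  have "lincomb n c a b = (\<Sum>k=1..n-1. (if k = a \<and> a = b then c k else 0)
      + (if k = a + 1 \<and> 1 \<le> a \<and> b = n then c k else 0)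
      + (if k = b + 1 \<and> 1 \<le> b \<and> a = n then c k else 0))"
    unfolding lincomb_def
  proof (intro sum.cong refl)
    fix k assume "k \<in> {1..n-1}"
    then have "1 \<le> k" "k < n" by auto
    then show "c k * Amat n k a b = (if k = a \<and> a = b then c k else 0)
      + (if k = a + 1 \<and> 1 \<le> a \<and> b = n then c k else 0)
      + (if k = b + 1 \<and> 1 \<le> b \<and> a = n then c k else 0)"
      by (simp add: Amat_entry distrib_left)
  qed
  also have "\<dots> = ?rhs"
    by (auto simp: sum.distrib simp flip: if_if_eq_conj)
  finally show ?thesis .
qed

lemma lincomb_entry_tail:
  assumes "j + 2 \<le> n" and "\<forall>k. j + 2 \<le> k \<and> k < n \<longrightarrow> c k = 0" and "j < a" "j < b"
  shows "lincomb n c a b = (if a = Suc j \<and> b = Suc j then c (Suc j) else 0)"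
  using assms by (auto simp: lincomb_entry)

lemma quad_form_two_point:
  fixes M :: mat and w :: "nat \<Rightarrow> real"
  assumes "finite S" "p \<in> S" "q \<in> S" "p \<noteq> q" "\<forall>x. x \<notin> {p, q} \<longrightarrow> w x = 0"
  shows "(\<Sum>a\<in>S. \<Sum>b\<in>S. w a * M a b * w b) =
     w p * M p p * w p + w p * M p q * w q + w q * M q p * w p + w q * M q q * w q"
proof -
  have inner: "(\<Sum>b\<in>S. w a * M a b * w b) = w a * M a p * w p + w a * M a q * w q" for a
  proof -
    have "(\<Sum>b\<in>S. w a * M a b * w b) = (\<Sum>b\<in>{p, q}. w a * M a b * w b)"
      by (rule sum.mono_neutral_right) (use assms in auto)
    then show ?thesis using assms(4) by simp
  qed
  have "(\<Sum>a\<in>S. w a * M a p * w p + w a * M a q * w q)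
      = (\<Sum>a\<in>{p, q}. w a * M a p * w p + w a * M a q * w q)"
    by (rule sum.mono_neutral_right) (use assms in auto)
  then show ?thesis using inner assms(4) by simp
qed

lemma quad_form_rank1_nonneg:
  fixes u v :: "nat \<Rightarrow> real"
  shows "(\<Sum>a\<in>S. \<Sum>b\<in>S. u a * (v a * v b) * u b) \<ge> 0"
proof -
  have "(\<Sum>a\<in>S. \<Sum>b\<in>S. u a * (v a * v b) * u b) = (\<Sum>a\<in>S. u a * v a)\<^sup>2"
    by (simp add: power2_eq_square sum_product mult_ac)
  then show ?thesis by simp
qed

lemma affine_nonneg_imp_slope_zero:
  fixes b d :: real
  assumes "\<And>s. b * s + d \<ge> 0"
  shows "b = 0"
proof (rule ccontr)
  assume "b \<noteq> 0"
  then have "b * (- (\<bar>d\<bar> + 1) / b) + d < 0" by simp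
  with assms show False by (meson not_le)
qed

lemma quadratic_nonneg_imp_linear_coeff_zero:
  fixes a b :: real
  assumes "\<And>s. a * s\<^sup>2 + b * s \<ge> 0"
  shows "b = 0"
proof (rule ccontr)
  assume b: "b \<noteq> 0"
  define t where "t = 1 / (\<bar>a\<bar> + 1)"
  have t: "t > 0" "a * t < 1"
    unfolding t_def by (auto simp: field_simps abs_if)
  have "a * (- b * t)\<^sup>2 + b * (- b * t) = - (b\<^sup>2 * t * (1 - a * t))"
    by (simp add: algebra_simps power2_eq_square)
  also have "\<dots> < 0" using b t by simp
  finally show False using assms by (meson not_le)
qed

lemma psd_diag_zero_imp_entry_zero:
  fixes X :: mat
  assumes "finite S"
    and psd: "\<forall>v::nat \<Rightarrow> real. (\<Sum>a\<in>S. \<Sum>b\<in>S. v a * X a b * v b) \<ge> 0"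
    and sym: "\<forall>a b. X a b = X b a"
    and "p \<in> S" "q \<in> S" "p \<noteq> q" and diag: "X p p = 0"
  shows "X p q = 0"
proof -
  have "(2 * X p q) * s + X q q \<ge> 0" for s
  proof -
    define w where "w = (\<lambda>x. if x = p then s else if x = q then 1 else (0::real))"
    have "0 \<le> (\<Sum>a\<in>S. \<Sum>b\<in>S. w a * X a b * w b)"
      using psd by blast
    also have "\<dots> = w p * X p p * w p + w p * X p q * w q + w q * X q p * w p + w q * X q q * w q"
      by (rule quad_form_two_point[where w = w]) (use assms in \<open>auto simp: w_def\<close>)
    also have "\<dots> = (2 * X p q) * s + X q q"
      using \<open>p \<noteq> q\<close> diag sym[rule_format, of q p] by (simp add: w_def algebra_simps)
    finally show ?thesis .
  qed
  from affine_nonneg_imp_slope_zero[OF this] show ?thesis by simp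
qed

lemma zero_oplus_psd_0: "zero_oplus_psd n 0 = PSD n"
  unfolding zero_oplus_psd_def PSD_def symS_def by auto

lemma quad_form_drop_zero_index:
  fixes X :: mat
  assumes "\<forall>b. X p b = 0" "\<forall>a. X a p = 0" "p \<le> n"
  shows "(\<Sum>a=p..n. \<Sum>b=p..n. v a * X a b * v b) = (\<Sum>a=Suc p..n. \<Sum>b=Suc p..n. v a * X a b * v b)"
  using assms by (simp add: sum.atLeast_Suc_atMost)

lemma zero_oplus_psd_Suc:
  assumes "Suc j \<le> n"
  shows "zero_oplus_psd n (Suc j) = {X \<in> zero_oplus_psd n j. X (Suc j) (Suc j) = 0}"
proof (intro set_eqI iffI)
  fix X assume X: "X \<in> zero_oplus_psd n (Suc j)"
  then have z: "\<forall>a b. a \<le> Suc j \<or> b \<le> Suc j \<longrightarrow> X a b = 0"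
    unfolding zero_oplus_psd_def by blast
  with assms have "(\<Sum>a=Suc j..n. \<Sum>b=Suc j..n. v a * X a b * v b) =
      (\<Sum>a=Suc (Suc j)..n. \<Sum>b=Suc (Suc j)..n. v a * X a b * v b)" for v
    by (intro quad_form_drop_zero_index) auto
  with X z show "X \<in> {X \<in> zero_oplus_psd n j. X (Suc j) (Suc j) = 0}"
    unfolding zero_oplus_psd_def by auto
next
  fix X assume "X \<in> {X \<in> zero_oplus_psd n j. X (Suc j) (Suc j) = 0}"
  then have X: "X \<in> zero_oplus_psd n j" and diag: "X (Suc j) (Suc j) = 0" by auto
  have sym: "\<forall>a b. X a b = X b a" and out: "\<forall>a b. a \<notin> {1..n} \<or> b \<notin> {1..n} \<longrightarrow> X a b = 0"
    using X unfolding zero_oplus_psd_def symS_def by auto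
  have z: "\<forall>a b. a \<le> j \<or> b \<le> j \<longrightarrow> X a b = 0"
    and psd: "\<forall>v::nat \<Rightarrow> real. (\<Sum>a\<in>{Suc j..n}. \<Sum>b\<in>{Suc j..n}. v a * X a b * v b) \<ge> 0"
    using X unfolding zero_oplus_psd_def by auto
  have row: "X (Suc j) b = 0" for b
  proof -
    consider "b \<le> j" | "b = Suc j" | "Suc j < b" "b \<le> n" | "n < b" by linarith
    then show ?thesis
    proof cases
      case 3
      then show ?thesis by (intro psd_diag_zero_imp_entry_zero[OF _ psd sym _ _ _ diag]) auto
    qed (use z diag out in auto)
  qed
  then have col: "X a (Suc j) = 0" for a using sym by metis
  have "(\<Sum>a=Suc j..n. \<Sum>b=Suc j..n. v a * X a b * v b) =
      (\<Sum>a=Suc (Suc j)..n. \<Sum>b=Suc (Suc j)..n. v a * X a b * v b)" for v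
    using row col assms by (intro quad_form_drop_zero_index) auto
  with X z row col show "X \<in> zero_oplus_psd n (Suc j)"
    unfolding zero_oplus_psd_def by (auto simp: le_Suc_eq)
qed

lemma rank1_mem_zero_oplus_psd:
  assumes "\<forall>x. x \<le> j \<or> x \<notin> {1..n} \<longrightarrow> v x = 0"
  shows "(\<lambda>a b. v a * v b) \<in> zero_oplus_psd n j"
  using assms quad_form_rank1_nonneg[where v = v]
  unfolding zero_oplus_psd_def symS_def by (auto simp: mult.commute)

lemma frob_rank1: "frob n Y (\<lambda>a b. v a * v b) = (\<Sum>a=1..n. \<Sum>b=1..n. v a * Y a b * v b)"
  unfolding frob_def by (intro sum.cong refl) (simp add: mult_ac)

lemma lincomb_dual_coeff_zero:
  assumes "j + 3 \<le> n" and dual: "lincomb n c \<in> dualc n (zero_oplus_psd n j)"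
    and "j + 2 \<le> k" "k < n"
  shows "c k = 0"
proof -
  define l where "l = k - 1"
  have l: "1 \<le> l" "l + 2 \<le> n" "j < l" "k = l + 1" using assms unfolding l_def by auto
  have entries: "lincomb n c l l = c l" "lincomb n c l n = c k" "lincomb n c n l = c k"
      "lincomb n c n n = 0"
    using l by (auto simp: lincomb_entry)
  have "c l * s\<^sup>2 + (2 * c k) * s \<ge> 0" for s
  proof -
    define v where "v = (\<lambda>x. if x = l then s else if x = n then 1 else (0::real))"
    have "(\<lambda>a b. v a * v b) \<in> zero_oplus_psd n j"
      by (rule rank1_mem_zero_oplus_psd) (use l in \<open>auto simp: v_def\<close>)
    then have "0 \<le> frob n (lincomb n c) (\<lambda>a b. v a * v b)"
      using dual unfolding dualc_def by blast
    also have "\<dots> = (\<Sum>a\<in>{1..n}. \<Sum>b\<in>{1..n}. v a * lincomb n c a b * v b)"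
      by (rule frob_rank1)
    also have "\<dots> = v l * lincomb n c l l * v l + v l * lincomb n c l n * v n
        + v n * lincomb n c n l * v l + v n * lincomb n c n n * v n"
      by (rule quad_form_two_point[where w = v]) (use l in \<open>auto simp: v_def\<close>)
    also have "\<dots> = c l * s\<^sup>2 + (2 * c k) * s"
      using l by (simp add: v_def entries power2_eq_square)
    finally show ?thesis .
  qed
  from quadratic_nonneg_imp_linear_coeff_zero[OF this] show ?thesis by simp
qed

lemma frob_lincomb_on_face:
  assumes "j + 2 \<le> n" and c: "\<forall>k. j + 2 \<le> k \<and> k < n \<longrightarrow> c k = 0"
    and X: "X \<in> zero_oplus_psd n j"
  shows "frob n (lincomb n c) X = c (Suc j) * X (Suc j) (Suc j)"
proof -
  have z: "X a b = 0" if "a \<le> j \<or> b \<le> j" for a b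
    using X that unfolding zero_oplus_psd_def by blast
  have "lincomb n c a b * X b a = (if a = Suc j \<and> b = Suc j then c (Suc j) * X (Suc j) (Suc j) else 0)"
    for a b
    using z lincomb_entry_tail[OF assms(1) c, of a b] by (cases "a \<le> j \<or> b \<le> j") auto
  then have "frob n (lincomb n c) X =
      (\<Sum>a=1..n. \<Sum>b=1..n. if a = Suc j \<and> b = Suc j then c (Suc j) * X (Suc j) (Suc j) else 0)"
    unfolding frob_def by simp
  also have "\<dots> = (\<Sum>a=1..n. if a = Suc j then c (Suc j) * X (Suc j) (Suc j) else 0)"
    by (intro sum.cong refl) (use assms(1) in auto)
  also have "\<dots> = c (Suc j) * X (Suc j) (Suc j)"
    using assms(1) by simp
  finally show ?thesis .
qed

lemma face_step:
  assumes "j + 3 \<le> n" and "Y \<in> linA n"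
    and dual: "Y \<in> dualc n (zero_oplus_psd n j)" and nonperp: "Y \<notin> perp n (zero_oplus_psd n j)"
  shows "zero_oplus_psd n j \<inter> {X \<in> symS n. frob n Y X = 0} = zero_oplus_psd n (Suc j)"
proof -
  obtain c where Y: "Y = lincomb n c"
    using \<open>Y \<in> linA n\<close> unfolding linA_eq_range_lincomb by blast
  have "\<forall>k. j + 2 \<le> k \<and> k < n \<longrightarrow> c k = 0"
    using lincomb_dual_coeff_zero assms(1) dual unfolding Y by blast
  then have frob_eq: "frob n Y X = c (Suc j) * X (Suc j) (Suc j)" if "X \<in> zero_oplus_psd n j" for X
    using frob_lincomb_on_face assms(1) that unfolding Y by simp
  have "Y \<in> symS n" using dual unfolding dualc_def by blast
  with nonperp frob_eq have "c (Suc j) \<noteq> 0" unfolding perp_def by auto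
  moreover have "zero_oplus_psd n j \<subseteq> symS n"
    unfolding zero_oplus_psd_def by blast
  ultimately show ?thesis
    using frob_eq assms(1) by (auto simp: zero_oplus_psd_Suc)
qed

lemma fr_face_Suc:
  "fr_face n K ys (Suc j) = fr_face n K ys j \<inter> {X \<in> symS n. frob n (ys ! j) X = 0}"
  unfolding fr_face_def by (auto simp: less_Suc_eq)

lemma strict_fr_seq_linA_fr_face:
  assumes "length Ys + 2 \<le> n" and strict: "strict_fr_seq n (PSD n) Ys" and "set Ys \<subseteq> linA n"
    and "j \<le> length Ys"
  shows "fr_face n (PSD n) Ys j = zero_oplus_psd n j"
  using \<open>j \<le> length Ys\<close>
proof (induction j)
  case 0
  show ?case by (auto simp: fr_face_def zero_oplus_psd_0 PSD_def)
next
  case (Suc j)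
  then have IH: "fr_face n (PSD n) Ys j = zero_oplus_psd n j" and j: "j < length Ys" by auto
  have "Ys ! j \<in> dualc n (zero_oplus_psd n j) - perp n (zero_oplus_psd n j)"
    using strict j IH unfolding strict_fr_seq_def by metis
  moreover have "Ys ! j \<in> linA n" using assms(3) j by auto
  ultimately show ?case
    unfolding fr_face_Suc IH using face_step assms(1) j by simp
qed

theorem claim1:
  fixes n i :: nat and Ys :: "mat list"
  assumes "n \<ge> 3"
    and "1 \<le> i" and "i \<le> (n - 1) - 1"
    and "length Ys = i"
    and "strict_fr_seq n (PSD n) Ys"
    and "set Ys \<subseteq> linA n"
  shows "fr_face n (PSD n) Ys i = zero_oplus_psd n i"
  using strict_fr_seq_linA_fr_face[of Ys n i] assms by simp

end
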